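(* There is a numerical constant $C>0$ such that the following holds. Let $\delta\in[0,1]$, $h\in(0,1/2]$, $(u,w)\in\mathcal A_\delta$, $E_h=E_h(u,w)$, and let $\tau$ be defined as below. Then \[ \min\{\tau^{1/2}h^{3/2},\tau^2\}\le C\,E_h . \]
   Context: Let $B_1=\{x\in\mathbb R^2:|x|<1\}$. For scalar functions $u,w$ on $(0,1)$ define $U(x)=\frac12(u(|x|)-|x|)\frac{x}{|x|}$ and $W(x)=w(|x|)$. For $\delta\in[0,1]$ let $\mathcal A_\delta$ be the set of pairs $(u,w)$ with $(U,W)\in W^{1,2}(B_1;\mathbb R^2)\times W^{2,2}(B_1)$, $w(0)=0$, $w(1)=1-\delta$. For $h>0$, \[ E_h(u,w)=\int_0^1\frac{u^2}{r}+r(u'+w'^2-1)^2+h^2\Big(rw''^2+\frac{w'^2}{r}\Big)dr . \] For $(u,w)\in\mathcal A_\delta$, $w'$ has a unique continuous representative on $(0,1)$ which extends continuously to $(0,1]$; $w'$ denotes this representative. Let $\mathcal W=\mathcal W^+\cup\mathcal W^-$ with $\mathcal W^+=(\frac12,\frac32)$, $\mathcal W^-=(-\frac32,-\frac12)$. Define $\tau=\max\{t\in(0,1]: w'(t)\notin\mathcal W\}$, and $\tau=0$ if $w'(t)\in\mathcal W$ for all $t\in(0,1]$. *)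

theory Defs
  imports "HOL-Analysis.Analysis"
begin

primrec Ck :: "nat \<Rightarrow> 'a::euclidean_space set \<Rightarrow> ('a \<Rightarrow> real) \<Rightarrow> bool" where
  "Ck 0 S f = continuous_on S f"
| "Ck (Suc k) S f =
     ((\<forall>x\<in>S. f differentiable (at x)) \<and>
      (\<forall>i\<in>Basis. Ck k S (\<lambda>x. frechet_derivative f (at x) i)))"

definition test_function :: "'a::euclidean_space set \<Rightarrow> ('a \<Rightarrow> real) \<Rightarrow> bool" where
  "test_function \<Omega> \<phi> \<longleftrightarrow>
     (\<forall>k. Ck k \<Omega> \<phi>) \<and> compact (closure {x. \<phi> x \<noteq> 0}) \<and> closure {x. \<phi> x \<noteq> 0} \<subseteq> \<Omega>"

definition locally_integrable :: "'a::euclidean_space set \<Rightarrow> ('a \<Rightarrow> real) \<Rightarrow> bool" where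
  "locally_integrable \<Omega> f \<longleftrightarrow>
     (\<forall>K. compact K \<and> K \<subseteq> \<Omega> \<longrightarrow> integrable (lebesgue_on K) f)"

definition weak_partial :: "'a::euclidean_space set \<Rightarrow> ('a \<Rightarrow> real) \<Rightarrow> 'a \<Rightarrow> ('a \<Rightarrow> real) \<Rightarrow> bool" where
  "weak_partial \<Omega> f i g \<longleftrightarrow>
     locally_integrable \<Omega> f \<and> locally_integrable \<Omega> g \<and>
     (\<forall>\<phi>. test_function \<Omega> \<phi> \<longrightarrow>
        (\<integral>x. f x * frechet_derivative \<phi> (at x) i \<partial>lebesgue_on \<Omega>)
          = - (\<integral>x. g x * \<phi> x \<partial>lebesgue_on \<Omega>))"

definition L2 :: "'a::euclidean_space set \<Rightarrow> ('a \<Rightarrow> real) \<Rightarrow> bool" where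
  "L2 \<Omega> f \<longleftrightarrow> f \<in> borel_measurable (lebesgue_on \<Omega>) \<and> integrable (lebesgue_on \<Omega>) (\<lambda>x. (f x)\<^sup>2)"

definition W12 :: "'a::euclidean_space set \<Rightarrow> ('a \<Rightarrow> real) \<Rightarrow> bool" where
  "W12 \<Omega> f \<longleftrightarrow> L2 \<Omega> f \<and> (\<forall>i\<in>Basis. \<exists>g. weak_partial \<Omega> f i g \<and> L2 \<Omega> g)"

definition W22 :: "'a::euclidean_space set \<Rightarrow> ('a \<Rightarrow> real) \<Rightarrow> bool" where
  "W22 \<Omega> f \<longleftrightarrow> L2 \<Omega> f \<and>
     (\<forall>i\<in>Basis. \<exists>g. weak_partial \<Omega> f i g \<and> L2 \<Omega> g \<and>
        (\<forall>j\<in>Basis. \<exists>g'. weak_partial \<Omega> g j g' \<and> L2 \<Omega> g'))"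

definition W12_vec :: "'a::euclidean_space set \<Rightarrow> ('a \<Rightarrow> 'b::euclidean_space) \<Rightarrow> bool" where
  "W12_vec \<Omega> U \<longleftrightarrow> (\<forall>b\<in>Basis. W12 \<Omega> (\<lambda>x. U x \<bullet> b))"

abbreviation B1 :: "(real^2) set" where "B1 \<equiv> ball 0 1"

definition Ufield :: "(real \<Rightarrow> real) \<Rightarrow> real^2 \<Rightarrow> real^2" where
  "Ufield u x = ((u (norm x) - norm x) / 2) *\<^sub>R (x /\<^sub>R norm x)"

definition Wfun :: "(real \<Rightarrow> real) \<Rightarrow> real^2 \<Rightarrow> real" where
  "Wfun w x = w (norm x)"

(* admissible class A_\<delta>.  w is any representative; the boundary values refer to
   its continuous representative on [0,1] *)
definition admissible :: "real \<Rightarrow> (real \<Rightarrow> real) \<Rightarrow> (real \<Rightarrow> real) \<Rightarrow> bool" where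
  "admissible \<delta> u w \<longleftrightarrow>
     W12_vec B1 (Ufield u) \<and> W22 B1 (Wfun w) \<and>
     (\<exists>w0. continuous_on {0..1} w0 \<and> (AE r in lebesgue_on {0<..<1}. w0 r = w r) \<and>
           w0 0 = 0 \<and> w0 1 = 1 - \<delta>)"

(* the energy E_h(u,w); du, dw, ddw are u', w', w'' *)
definition energy :: "real \<Rightarrow> (real \<Rightarrow> real) \<Rightarrow> (real \<Rightarrow> real) \<Rightarrow> (real \<Rightarrow> real) \<Rightarrow> (real \<Rightarrow> real) \<Rightarrow> ennreal" where
  "energy h u du dw ddw =
     (\<integral>\<^sup>+ r. ennreal ((u r)\<^sup>2 / r + r * (du r + (dw r)\<^sup>2 - 1)\<^sup>2
                       + h\<^sup>2 * (r * (ddw r)\<^sup>2 + (dw r)\<^sup>2 / r)) \<partial>lebesgue_on {0<..<1})"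

definition Wset :: "real set" where
  "Wset = {1/2<..<3/2} \<union> {-3/2<..<-1/2}"

definition tau :: "(real \<Rightarrow> real) \<Rightarrow> real" where
  "tau dw = (if \<exists>t\<in>{0<..1}. dw t \<notin> Wset
             then (GREATEST t. t \<in> {0<..1} \<and> dw t \<notin> Wset) else 0)"

end

theory Submission
  imports Defs "HOL-Computational_Algebra.Polynomial"
begin

text \<open>Write \<open>e = E\<^sub>h\<close> and \<open>T = \<tau> > 0\<close>, so \<open>|w'(T)| \<le> 1/2\<close> or \<open>|w'(T)| \<ge> 3/2\<close>.
  For \<open>0 < l \<le> T/2\<close> with \<open>32 l e \<le> h\<^sup>2 T\<close>, the bending term \<open>h\<^sup>2 \<integral> r w''\<^sup>2\<close> keeps the
  oscillation of \<open>w'\<close> on \<open>[T - l, T]\<close> below \<open>1/4\<close>, so \<open>w'\<^sup>2 - 1\<close> has a fixed sign and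
  modulus at least \<open>7/16\<close> there. Testing \<open>u' + w'\<^sup>2 - 1\<close> against a smooth cutoff on
  \<open>[T - l, T - l/2]\<close> and moving the derivative onto the cutoff, the stretching term and
  \<open>\<integral> u\<^sup>2/r\<close> force \<open>l \<lesssim> e/T + T e/l\<^sup>2\<close>. The choice \<open>l = min (T/2) (h\<^sup>2 T/(32 e))\<close>
  then gives \<open>min (T\<^sup>1\<^sup>/\<^sup>2 h\<^sup>3\<^sup>/\<^sup>2) (T\<^sup>2) \<lesssim> e\<close>.\<close>

section \<open>Smooth real functions\<close>

lemma Ck_Suc_UNIV_iff:
  "Ck (Suc k) UNIV f \<longleftrightarrow> (\<exists>f'. (\<forall>x. (f has_real_derivative f' x) (at x)) \<and> Ck k UNIV f')"
proof
  assume "Ck (Suc k) UNIV f"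
  then have diff: "\<forall>x. f differentiable (at x)"
    and smooth: "Ck k UNIV (\<lambda>x. frechet_derivative f (at x) 1)"
    by (auto simp: Basis_real_def)
  have "(f has_real_derivative frechet_derivative f (at x) 1) (at x)" for x
  proof -
    have deriv: "(f has_derivative frechet_derivative f (at x)) (at x)"
      using diff frechet_derivative_works by blast
    then obtain c where "frechet_derivative f (at x) = (\<lambda>h. h * c)"
      using has_derivative_bounded_linear real_bounded_linear by blast
    moreover have "(\<lambda>h. h * c) = (*) c"
      by (auto simp: mult.commute)
    ultimately show ?thesis
      using deriv by (simp add: has_field_derivative_def)
  qed
  with smooth show "\<exists>f'. (\<forall>x. (f has_real_derivative f' x) (at x)) \<and> Ck k UNIV f'"
    by (intro exI[where x="\<lambda>x. frechet_derivative f (at x) 1"]) auto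
next
  assume "\<exists>f'. (\<forall>x. (f has_real_derivative f' x) (at x)) \<and> Ck k UNIV f'"
  then obtain f' where deriv: "\<And>x. (f has_real_derivative f' x) (at x)" and "Ck k UNIV f'"
    by blast
  moreover have "(\<lambda>x. frechet_derivative f (at x) 1) = f'"
  proof
    fix x
    have "(\<lambda>h. f' x * h) = frechet_derivative f (at x)"
      using deriv[of x] by (simp add: has_field_derivative_def frechet_derivative_at)
    then show "frechet_derivative f (at x) 1 = f' x"
      by (metis mult.right_neutral)
  qed
  moreover have "\<forall>x. f differentiable (at x)"
    using deriv by (auto simp: differentiable_def has_field_derivative_def)
  ultimately show "Ck (Suc k) UNIV f"
    by (simp add: Basis_real_def)
qed

declare Ck.simps(2)[simp del]

lemma CkI:
  "(\<And>x. (f has_real_derivative f' x) (at x)) \<Longrightarrow> Ck k UNIV f' \<Longrightarrow> Ck (Suc k) UNIV f"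
  using Ck_Suc_UNIV_iff by blast

lemma CkE:
  assumes "Ck (Suc k) UNIV f"
  obtains f' where "\<And>x. (f has_real_derivative f' x) (at x)" "Ck k UNIV f'"
  using assms Ck_Suc_UNIV_iff by blast

lemma continuous_on_if_has_real_derivative:
  "(\<And>x. (f has_real_derivative f' x) (at x)) \<Longrightarrow> continuous_on UNIV f"
  by (meson DERIV_isCont continuous_at_imp_continuous_on)

lemma Ck_Suc_imp_Ck:
  fixes f :: "real \<Rightarrow> real"
  shows "Ck (Suc k) UNIV f \<Longrightarrow> Ck k UNIV f"
proof (induction k arbitrary: f)
  case 0
  then show ?case
    by (metis CkE Ck.simps(1) continuous_on_if_has_real_derivative)
next
  case (Suc k)
  then obtain f' where "\<And>x. (f has_real_derivative f' x) (at x)" "Ck (Suc k) UNIV f'"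
    using CkE by blast
  with Suc.IH show ?case
    by (intro CkI) auto
qed

lemma Ck_const: "Ck k UNIV (\<lambda>x::real. c :: real)"
proof (induction k arbitrary: c)
  case (Suc k)
  show ?case
    by (rule CkI[of _ "\<lambda>x. 0"]) (auto intro: Suc.IH)
qed simp

lemma Ck_add:
  fixes f g :: "real \<Rightarrow> real"
  shows "Ck k UNIV f \<Longrightarrow> Ck k UNIV g \<Longrightarrow> Ck k UNIV (\<lambda>x. f x + g x)"
proof (induction k arbitrary: f g)
  case (Suc k)
  obtain f' g' where "\<And>x. (f has_real_derivative f' x) (at x)" "Ck k UNIV f'"
    and "\<And>x. (g has_real_derivative g' x) (at x)" "Ck k UNIV g'"
    using Suc.prems CkE by metis
  then show ?case
    by (intro CkI[where f'="\<lambda>x. f' x + g' x"]) (auto intro: derivative_eq_intros Suc.IH)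
qed (simp add: continuous_on_add)

lemma Ck_mult:
  fixes f g :: "real \<Rightarrow> real"
  shows "Ck k UNIV f \<Longrightarrow> Ck k UNIV g \<Longrightarrow> Ck k UNIV (\<lambda>x. f x * g x)"
proof (induction k arbitrary: f g)
  case (Suc k)
  obtain f' g' where "\<And>x. (f has_real_derivative f' x) (at x)" "Ck k UNIV f'"
    and "\<And>x. (g has_real_derivative g' x) (at x)" "Ck k UNIV g'"
    using Suc.prems CkE by metis
  moreover have "Ck k UNIV f" "Ck k UNIV g"
    using Suc.prems Ck_Suc_imp_Ck by auto
  ultimately show ?case
    by (intro CkI[where f'="\<lambda>x. f x * g' x + f' x * g x"]) (auto intro: DERIV_mult' Suc.IH Ck_add)
qed (simp add: continuous_on_mult)

lemma Ck_diff:
  fixes f g :: "real \<Rightarrow> real"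
  shows "Ck k UNIV f \<Longrightarrow> Ck k UNIV g \<Longrightarrow> Ck k UNIV (\<lambda>x. f x - g x)"
  using Ck_add[of k f "\<lambda>x. (-1) * g x"] Ck_mult[OF Ck_const, of k g "-1"] by simp

lemma Ck_divide:
  fixes f g :: "real \<Rightarrow> real"
  shows "Ck k UNIV f \<Longrightarrow> Ck k UNIV g \<Longrightarrow> (\<And>x. g x \<noteq> 0) \<Longrightarrow> Ck k UNIV (\<lambda>x. f x / g x)"
proof (induction k arbitrary: f g)
  case (Suc k)
  obtain f' g' where "\<And>x. (f has_real_derivative f' x) (at x)" "Ck k UNIV f'"
    and "\<And>x. (g has_real_derivative g' x) (at x)" "Ck k UNIV g'"
    using Suc.prems CkE by metis
  moreover have "Ck k UNIV f" "Ck k UNIV g"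
    using Suc.prems Ck_Suc_imp_Ck by auto
  ultimately show ?case
    using Suc.prems(3)
    by (intro CkI[where f'="\<lambda>x. (f' x * g x - f x * g' x) / (g x * g x)"])
       (auto intro!: DERIV_divide Suc.IH Ck_diff Ck_mult)
qed (simp add: continuous_on_divide)

lemma Ck_compose_affine:
  fixes f :: "real \<Rightarrow> real"
  shows "Ck k UNIV f \<Longrightarrow> Ck k UNIV (\<lambda>x. f (c * x + d))"
proof (induction k arbitrary: f)
  case 0
  then show ?case
    by (auto intro!: continuous_on_compose2[of UNIV f] continuous_intros)
next
  case (Suc k)
  obtain f' where deriv: "\<And>x. (f has_real_derivative f' x) (at x)" and "Ck k UNIV f'"
    using Suc.prems CkE by blast
  have "((\<lambda>x. f (c * x + d)) has_real_derivative f' (c * x + d) * c) (at x)" for x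
    by (rule DERIV_chain2[OF deriv]) (auto intro!: derivative_eq_intros)
  moreover have "Ck k UNIV (\<lambda>x. f' (c * x + d) * c)"
    using Ck_mult[OF Suc.IH[OF \<open>Ck k UNIV f'\<close>] Ck_const] .
  ultimately show ?case
    by (rule CkI)
qed

lemma Ck_UNIV_imp_Ck: "Ck k UNIV f \<Longrightarrow> Ck k S f"
proof (induction k arbitrary: f)
  case 0
  then show ?case
    using continuous_on_subset by auto
next
  case (Suc k)
  then show ?case
    by (auto simp: Ck.simps(2))
qed

section \<open>A smooth cutoff function\<close>

definition expinv_poly :: "real poly \<Rightarrow> real \<Rightarrow> real" where
  "expinv_poly p x = (if 0 < x then poly p (inverse x) * exp (- inverse x) else 0)"

text \<open>The derivative of \<open>p(1/x) exp(-1/x)\<close> is \<open>q(1/x) exp(-1/x)\<close> with \<open>q(y) = y\<^sup>2 (p(y) - p'(y))\<close>.\<close>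
definition expinv_poly_deriv :: "real poly \<Rightarrow> real poly" where
  "expinv_poly_deriv p = [:0, 0, 1:] * (p - pderiv p)"

lemma poly_times_exp_minus_tendsto_0: "((\<lambda>y::real. poly p y * exp (- y)) \<longlongrightarrow> 0) at_top"
proof -
  have "((\<lambda>y. \<Sum>i\<le>degree p. coeff p i * (y ^ i / exp y)) \<longlongrightarrow> (\<Sum>i\<le>degree p. coeff p i * 0)) at_top"
    by (intro tendsto_sum tendsto_mult tendsto_const tendsto_power_div_exp_0)
  moreover have "poly p y * exp (- y) = (\<Sum>i\<le>degree p. coeff p i * (y ^ i / exp y))" for y
    by (simp add: poly_altdef exp_minus divide_inverse sum_distrib_right mult.assoc)
  ultimately show ?thesis
    by simp
qed

lemma expinv_poly_tendsto_0: "(expinv_poly p \<longlongrightarrow> 0) (at 0)"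
proof (rule filterlim_split_at)
  show "(expinv_poly p \<longlongrightarrow> 0) (at_left 0)"
    by (rule tendsto_eventually) (auto simp: expinv_poly_def eventually_at_left_field intro: exI[of _ "-1"])
  have "((\<lambda>x. poly p (inverse x) * exp (- inverse x)) \<longlongrightarrow> 0) (at_right 0)"
    using filterlim_compose[OF poly_times_exp_minus_tendsto_0 filterlim_inverse_at_top_right]
    by (simp add: o_def)
  then show "(expinv_poly p \<longlongrightarrow> 0) (at_right 0)"
    by (rule tendsto_cong[THEN iffD1, rotated])
       (auto simp: expinv_poly_def eventually_at_right_field intro: exI[of _ 1])
qed

lemma expinv_poly_deriv:
  "(expinv_poly p has_real_derivative expinv_poly (expinv_poly_deriv p) x) (at x)"
proof -
  consider "x < 0" | "x = 0" | "x > 0"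
    by linarith
  then show ?thesis
  proof cases
    case 1
    have "((\<lambda>x. 0) has_real_derivative expinv_poly (expinv_poly_deriv p) x) (at x)"
      using 1 by (simp add: expinv_poly_def)
    then show ?thesis
      by (rule has_field_derivative_transform_within_open[where S="{..<0}"])
         (use 1 in \<open>auto simp: expinv_poly_def\<close>)
  next
    case 2
    have "expinv_poly p h / h = expinv_poly ([:0, 1:] * p) h" for h
      by (cases "h > 0") (auto simp: expinv_poly_def field_simps)
    moreover have "expinv_poly p 0 = 0"
      by (simp add: expinv_poly_def)
    ultimately have "((\<lambda>h. (expinv_poly p (0 + h) - expinv_poly p 0) / h) \<longlongrightarrow> 0) (at 0)"
      using expinv_poly_tendsto_0[of "[:0, 1:] * p"] by simp
    then show ?thesis
      using 2 by (simp add: DERIV_def expinv_poly_def)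
  next
    case 3
    have "((\<lambda>x. poly p (inverse x) * exp (- inverse x)) has_real_derivative
       poly (pderiv p) (inverse x) * (- inverse (x\<^sup>2)) * exp (- inverse x)
       + poly p (inverse x) * (exp (- inverse x) * inverse (x\<^sup>2))) (at x)"
      using 3
      by (auto intro!: derivative_eq_intros DERIV_chain2[OF poly_DERIV] simp: power2_eq_square)
    moreover have "poly (pderiv p) (inverse x) * (- inverse (x\<^sup>2)) * exp (- inverse x)
       + poly p (inverse x) * (exp (- inverse x) * inverse (x\<^sup>2))
       = expinv_poly (expinv_poly_deriv p) x"
      using 3 by (simp add: expinv_poly_def expinv_poly_deriv_def algebra_simps power2_eq_square)
    ultimately have "((\<lambda>x. poly p (inverse x) * exp (- inverse x)) has_real_derivative
        expinv_poly (expinv_poly_deriv p) x) (at x)"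
      by simp
    then show ?thesis
      by (rule has_field_derivative_transform_within_open[where S="{0<..}"])
         (use 3 in \<open>auto simp: expinv_poly_def\<close>)
  qed
qed

lemma Ck_expinv_poly: "Ck k UNIV (expinv_poly p)"
proof (induction k arbitrary: p)
  case 0
  then show ?case
    using continuous_on_if_has_real_derivative[OF expinv_poly_deriv] by simp
next
  case (Suc k)
  then show ?case
    using expinv_poly_deriv by (intro CkI) auto
qed

abbreviation expinv :: "real \<Rightarrow> real" where "expinv \<equiv> expinv_poly 1"
abbreviation expinv' :: "real \<Rightarrow> real" where "expinv' \<equiv> expinv_poly [:0, 0, 1:]"

lemma expinv_deriv: "(expinv has_real_derivative expinv' x) (at x)"
  using expinv_poly_deriv[of 1 x] by (simp add: expinv_poly_deriv_def)

lemma continuous_on_expinv_poly: "continuous_on A (expinv_poly p)"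
  using continuous_on_if_has_real_derivative[OF expinv_poly_deriv] continuous_on_subset by blast

lemma expinv_sum_pos: "0 < expinv x + expinv (1 - x)"
  by (cases "x > 0") (auto simp: expinv_poly_def add_pos_nonneg add_nonneg_pos)

definition smooth_step :: "real \<Rightarrow> real" where
  "smooth_step x = expinv x / (expinv x + expinv (1 - x))"

definition smooth_step' :: "real \<Rightarrow> real" where
  "smooth_step' x = (expinv' x * expinv (1 - x) + expinv x * expinv' (1 - x))
                      / (expinv x + expinv (1 - x))\<^sup>2"

lemma smooth_step_deriv: "(smooth_step has_real_derivative smooth_step' x) (at x)"
proof -
  have "((\<lambda>x. expinv (1 - x)) has_real_derivative expinv' (1 - x) * (-1)) (at x)"
    by (rule DERIV_chain2[OF expinv_deriv]) (auto intro!: derivative_eq_intros)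
  then have "(smooth_step has_real_derivative
      (expinv' x * (expinv x + expinv (1 - x)) - expinv x * (expinv' x + expinv' (1 - x) * (-1)))
        / ((expinv x + expinv (1 - x)) * (expinv x + expinv (1 - x)))) (at x)"
    unfolding smooth_step_def[abs_def] using expinv_sum_pos[of x]
    by (intro DERIV_divide DERIV_add expinv_deriv) auto
  then show ?thesis
    by (simp add: smooth_step'_def algebra_simps power2_eq_square)
qed

lemma Ck_smooth_step: "Ck k UNIV smooth_step"
proof -
  have "Ck k UNIV (\<lambda>x. expinv x / (expinv x + expinv ((-1) * x + 1)))"
    using expinv_sum_pos[THEN less_imp_neq, THEN not_sym] by (intro Ck_divide Ck_add Ck_compose_affine Ck_expinv_poly) auto
  then show ?thesis
    by (simp add: smooth_step_def[abs_def])
qed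

lemma smooth_step_nonneg: "0 \<le> smooth_step x"
  by (simp add: smooth_step_def expinv_poly_def)

lemma smooth_step_le_1: "smooth_step x \<le> 1"
  using expinv_sum_pos[of x] by (simp add: smooth_step_def expinv_poly_def)

lemma smooth_step_eq_0: "x \<le> 0 \<Longrightarrow> smooth_step x = 0"
  by (simp add: smooth_step_def expinv_poly_def)

lemma smooth_step_eq_1: "1 \<le> x \<Longrightarrow> smooth_step x = 1"
  using expinv_sum_pos[of x] by (simp add: smooth_step_def expinv_poly_def)

lemma smooth_step'_nonneg: "0 \<le> smooth_step' x"
  by (simp add: smooth_step'_def expinv_poly_def)

lemma smooth_step'_eq_0: "x \<le> 0 \<or> 1 \<le> x \<Longrightarrow> smooth_step' x = 0"
  by (auto simp: smooth_step'_def expinv_poly_def)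

lemma continuous_on_smooth_step': "continuous_on A smooth_step'"
  unfolding smooth_step'_def[abs_def] using expinv_sum_pos[THEN less_imp_neq, THEN not_sym]
  by (intro continuous_intros continuous_on_compose2[OF continuous_on_expinv_poly]) 
     (auto simp: power2_eq_square)

lemma smooth_step'_bounded: "\<exists>M. 1 \<le> M \<and> (\<forall>x. smooth_step' x \<le> M)"
proof -
  obtain B where B: "\<And>x. x \<in> {0..1} \<Longrightarrow> norm (smooth_step' x) \<le> B"
    using compact_imp_bounded[OF compact_continuous_image[OF continuous_on_smooth_step']]
    by (fastforce simp: bounded_iff)
  have "smooth_step' x \<le> max B 1" for x
    using B[of x] smooth_step'_eq_0[of x] by (cases "x \<in> {0..1}") auto
  then show ?thesis
    by (intro exI[of _ "max B 1"]) auto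
qed

definition step_slope :: real where
  "step_slope = (SOME M. 1 \<le> M \<and> (\<forall>x. smooth_step' x \<le> M))"

lemma step_slope: "1 \<le> step_slope" "smooth_step' x \<le> step_slope"
  using someI_ex[OF smooth_step'_bounded] unfolding step_slope_def by auto

lemma smooth_step_scaled_deriv:
  assumes "e \<noteq> 0"
  shows "((\<lambda>x. smooth_step ((x - s) / e)) has_real_derivative smooth_step' ((x - s) / e) / e) (at x)"
proof -
  have "((\<lambda>x. smooth_step ((x - s) / e)) has_real_derivative smooth_step' ((x - s) / e) * (1 / e)) (at x)"
    using assms by (intro DERIV_chain2[OF smooth_step_deriv]) (auto intro!: derivative_eq_intros)
  then show ?thesis
    by simp
qed

lemma smooth_step_reflected_deriv:
  assumes "e \<noteq> 0"
  shows "((\<lambda>x. smooth_step ((t - x) / e)) has_real_derivative - smooth_step' ((t - x) / e) / e) (at x)"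
proof -
  have "((\<lambda>x. smooth_step ((t - x) / e)) has_real_derivative smooth_step' ((t - x) / e) * (- 1 / e)) (at x)"
    using assms by (intro DERIV_chain2[OF smooth_step_deriv]) (auto intro!: derivative_eq_intros)
  then show ?thesis
    by simp
qed

definition cutoff :: "real \<Rightarrow> real \<Rightarrow> real \<Rightarrow> real \<Rightarrow> real" where
  "cutoff s t e x = smooth_step ((x - s) / e) * smooth_step ((t - x) / e)"

definition cutoff_rise :: "real \<Rightarrow> real \<Rightarrow> real \<Rightarrow> real" where
  "cutoff_rise s e x = smooth_step' ((x - s) / e) / e"

definition cutoff_fall :: "real \<Rightarrow> real \<Rightarrow> real \<Rightarrow> real" where
  "cutoff_fall t e x = smooth_step' ((t - x) / e) / e"

lemma cutoff_rise_nonneg: "0 < e \<Longrightarrow> 0 \<le> cutoff_rise s e x"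
  by (simp add: cutoff_rise_def smooth_step'_nonneg)

lemma cutoff_fall_nonneg: "0 < e \<Longrightarrow> 0 \<le> cutoff_fall t e x"
  by (simp add: cutoff_fall_def smooth_step'_nonneg)

lemma cutoff_rise_le: "0 < e \<Longrightarrow> cutoff_rise s e x \<le> step_slope / e"
  by (simp add: cutoff_rise_def divide_right_mono step_slope)

lemma cutoff_fall_le: "0 < e \<Longrightarrow> cutoff_fall t e x \<le> step_slope / e"
  by (simp add: cutoff_fall_def divide_right_mono step_slope)

lemma cutoff_rise_eq_0:
  assumes "0 < e" "x \<notin> {s<..<s + e}"
  shows "cutoff_rise s e x = 0"
  using assms by (auto intro!: smooth_step'_eq_0 simp: cutoff_rise_def divide_le_0_iff le_divide_eq)

lemma cutoff_fall_eq_0: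
  assumes "0 < e" "x \<notin> {t - e<..<t}"
  shows "cutoff_fall t e x = 0"
  using assms by (auto intro!: smooth_step'_eq_0 simp: cutoff_fall_def divide_le_0_iff le_divide_eq)

lemma continuous_on_cutoff_rise: "continuous_on A (cutoff_rise s e)"
  unfolding cutoff_rise_def[abs_def] divide_inverse
  by (intro continuous_intros continuous_on_compose2[OF continuous_on_smooth_step']) auto

lemma continuous_on_cutoff_fall: "continuous_on A (cutoff_fall t e)"
  unfolding cutoff_fall_def[abs_def] divide_inverse
  by (intro continuous_intros continuous_on_compose2[OF continuous_on_smooth_step']) auto

lemma cutoff_nonneg: "0 \<le> cutoff s t e x"
  by (simp add: cutoff_def smooth_step_nonneg)

lemma cutoff_le_1: "cutoff s t e x \<le> 1"
  unfolding cutoff_def by (meson mult_le_one smooth_step_le_1 smooth_step_nonneg)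

lemma cutoff_eq_0:
  assumes "0 < e" "x \<notin> {s<..<t}"
  shows "cutoff s t e x = 0"
  using assms by (auto simp: cutoff_def smooth_step_eq_0 divide_le_0_iff)

lemma cutoff_eq_1:
  assumes "0 < e" "x \<in> {s + e..t - e}"
  shows "cutoff s t e x = 1"
  using assms by (simp add: cutoff_def smooth_step_eq_1 le_divide_eq)

lemma cutoff_deriv:
  assumes e: "0 < e" "3 * e \<le> t - s"
  shows "(cutoff s t e has_real_derivative cutoff_rise s e x - cutoff_fall t e x) (at x)"
proof -
  have rise: "((\<lambda>x. smooth_step ((x - s) / e)) has_real_derivative cutoff_rise s e x) (at x)"
    using smooth_step_scaled_deriv[of e s x] e by (simp add: cutoff_rise_def)
  have fall: "((\<lambda>x. smooth_step ((t - x) / e)) has_real_derivative - cutoff_fall t e x) (at x)"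
    using smooth_step_reflected_deriv[of e t x] e by (simp add: cutoff_fall_def)
  have rise_only: "cutoff_rise s e x * smooth_step ((t - x) / e) = cutoff_rise s e x"
    using e cutoff_rise_eq_0[OF e(1), of x s]
    by (cases "x \<in> {s<..<s + e}") (auto simp: smooth_step_eq_1 le_divide_eq)
  have fall_only: "- cutoff_fall t e x * smooth_step ((x - s) / e) = - cutoff_fall t e x"
    using e cutoff_fall_eq_0[OF e(1), of x t]
    by (cases "x \<in> {t - e<..<t}") (auto simp: smooth_step_eq_1 le_divide_eq)
  show ?thesis
    using DERIV_mult[OF rise fall] unfolding rise_only fall_only by (simp add: cutoff_def[abs_def])
qed

lemma frechet_derivative_cutoff:
  assumes "0 < e" "3 * e \<le> t - s"
  shows "frechet_derivative (cutoff s t e) (at x) 1 = cutoff_rise s e x - cutoff_fall t e x"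
  using frechet_derivative_at[OF cutoff_deriv[OF assms, of x, unfolded has_field_derivative_def]]
  by (metis mult.right_neutral)

lemma Ck_cutoff: "Ck k UNIV (cutoff s t e)"
proof -
  have "Ck k UNIV (\<lambda>x. smooth_step ((1/e) * x + (- s/e)) * smooth_step ((- 1/e) * x + t/e))"
    by (intro Ck_mult Ck_compose_affine Ck_smooth_step)
  then show ?thesis
    by (simp add: cutoff_def[abs_def] diff_divide_distrib)
qed

lemma continuous_on_cutoff: "continuous_on A (cutoff s t e)"
  using Ck_UNIV_imp_Ck[OF Ck_cutoff, of 0] by simp

lemma test_function_cutoff:
  assumes "0 < e" "{s..t} \<subseteq> \<Omega>"
  shows "test_function \<Omega> (cutoff s t e)"
proof -
  have supp: "{x. cutoff s t e x \<noteq> 0} \<subseteq> {s..t}"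
  proof
    fix x
    assume "x \<in> {x. cutoff s t e x \<noteq> 0}"
    then have "x \<in> {s<..<t}"
      using cutoff_eq_0[OF assms(1), of x s t] by blast
    then show "x \<in> {s..t}"
      by simp
  qed
  then have "closure {x. cutoff s t e x \<noteq> 0} \<subseteq> \<Omega>"
    using assms(2) closure_minimal[OF supp] by auto
  moreover have "compact (closure {x. cutoff s t e x \<noteq> 0})"
    unfolding compact_closure by (rule bounded_subset[OF bounded_closed_interval supp])
  ultimately show ?thesis
    using Ck_UNIV_imp_Ck[OF Ck_cutoff] by (simp add: test_function_def)
qed

lemma integral_cutoff_rise:
  assumes "0 < e"
  shows "integral\<^sup>L (lebesgue_on {s..s + e}) (cutoff_rise s e) = 1"
proof -
  have "(cutoff_rise s e has_integral (smooth_step ((s + e - s) / e) - smooth_step ((s - s) / e))) {s..s + e}"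
    using assms smooth_step_scaled_deriv
    by (intro fundamental_theorem_of_calculus)
       (auto simp: cutoff_rise_def has_real_derivative_iff_has_vector_derivative[symmetric]
             intro: has_field_derivative_at_within)
  moreover have "smooth_step ((s + e - s) / e) - smooth_step ((s - s) / e) = 1"
    using assms by (simp add: smooth_step_eq_0 smooth_step_eq_1)
  moreover have "(cutoff_rise s e has_integral integral\<^sup>L (lebesgue_on {s..s + e}) (cutoff_rise s e)) {s..s + e}"
    by (intro has_integral_integral_lebesgue_on continuous_imp_integrable_real continuous_on_cutoff_rise) auto
  ultimately show ?thesis
    using has_integral_unique by metis
qed

lemma integral_cutoff_fall:
  assumes "0 < e"
  shows "integral\<^sup>L (lebesgue_on {t - e..t}) (cutoff_fall t e) = 1"
proof -
  have "((\<lambda>x. - smooth_step ((t - x) / e)) has_real_derivative cutoff_fall t e x) (at x)" for x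
    using DERIV_minus[OF smooth_step_reflected_deriv[of e t x]] assms by (simp add: cutoff_fall_def)
  then have "(cutoff_fall t e has_integral (- smooth_step ((t - t) / e) - (- smooth_step ((t - (t - e)) / e)))) {t - e..t}"
    using assms
    by (intro fundamental_theorem_of_calculus)
       (auto simp: has_real_derivative_iff_has_vector_derivative[symmetric] intro: has_field_derivative_at_within)
  moreover have "- smooth_step ((t - t) / e) - (- smooth_step ((t - (t - e)) / e)) = 1"
    using assms by (simp add: smooth_step_eq_0 smooth_step_eq_1)
  moreover have "(cutoff_fall t e has_integral integral\<^sup>L (lebesgue_on {t - e..t}) (cutoff_fall t e)) {t - e..t}"
    by (intro has_integral_integral_lebesgue_on continuous_imp_integrable_real continuous_on_cutoff_fall) auto
  ultimately show ?thesis
    using has_integral_unique by metis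
qed

lemma integral_cutoff_ge:
  assumes e: "0 < e" "2 * e \<le> t - s"
  shows "t - s - 2 * e \<le> integral\<^sup>L (lebesgue_on {s..t}) (cutoff s t e)"
proof -
  let ?L = "lebesgue_on {s..t}"
  have "t - s - 2 * e = integral\<^sup>L ?L (indicator {s + e..t - e} :: real \<Rightarrow> real)"
    using e by (simp add: measure_restrict_space Int_absorb2)
  also have "\<dots> \<le> integral\<^sup>L ?L (cutoff s t e)"
  proof (rule integral_mono)
    show "integrable ?L (indicator {s + e..t - e} :: real \<Rightarrow> real)"
      using e by (intro integrable_real_indicator) (auto simp: emeasure_restrict_space sets_restrict_space_iff)
    show "integrable ?L (cutoff s t e)"
      by (intro continuous_imp_integrable_real continuous_on_cutoff)
    show "indicator {s + e..t - e} x \<le> cutoff s t e x" for x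
      using cutoff_eq_1[OF e(1), of x s t] cutoff_nonneg[of s t e x] by (auto simp: indicator_def)
  qed
  finally show ?thesis .
qed

section \<open>Weak derivatives on the line\<close>

lemma integral_lebesgue_on_vanishing_outside:
  fixes f :: "real \<Rightarrow> real"
  assumes "A \<subseteq> B" "A \<in> sets lebesgue" "B \<in> sets lebesgue" "\<And>x. x \<notin> A \<Longrightarrow> f x = 0"
  shows "integral\<^sup>L (lebesgue_on B) f = integral\<^sup>L (lebesgue_on A) f"
proof -
  have "(\<lambda>x. indicator B x *\<^sub>R f x) = (\<lambda>x. indicator A x *\<^sub>R f x)"
    using assms(1,4) by (auto simp: indicator_def fun_eq_iff)
  then show ?thesis
    using assms(2,3) by (simp add: integral_restrict_space)
qed

lemma weak_partial_integrable:
  assumes "weak_partial \<Omega> f i g" "compact K" "K \<subseteq> \<Omega>"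
  shows "integrable (lebesgue_on K) f" "integrable (lebesgue_on K) g"
  using assms unfolding weak_partial_def locally_integrable_def by blast+

lemma weak_partial_cutoff:
  fixes f g :: "real \<Rightarrow> real"
  assumes wp: "weak_partial \<Omega> f 1 g" and "open \<Omega>" "{s..t} \<subseteq> \<Omega>"
    and e: "0 < e" "3 * e \<le> t - s"
  shows "integral\<^sup>L (lebesgue_on {s..t}) (\<lambda>x. f x * (cutoff_rise s e x - cutoff_fall t e x))
       = - integral\<^sup>L (lebesgue_on {s..t}) (\<lambda>x. g x * cutoff s t e x)"
proof -
  have "integral\<^sup>L (lebesgue_on \<Omega>) (\<lambda>x. f x * frechet_derivative (cutoff s t e) (at x) 1)
      = - integral\<^sup>L (lebesgue_on \<Omega>) (\<lambda>x. g x * cutoff s t e x)"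
    using wp test_function_cutoff[OF e(1) \<open>{s..t} \<subseteq> \<Omega>\<close>] unfolding weak_partial_def by blast
  then have "integral\<^sup>L (lebesgue_on \<Omega>) (\<lambda>x. f x * (cutoff_rise s e x - cutoff_fall t e x))
      = - integral\<^sup>L (lebesgue_on \<Omega>) (\<lambda>x. g x * cutoff s t e x)"
    by (simp add: frechet_derivative_cutoff[OF e])
  moreover have "integral\<^sup>L (lebesgue_on \<Omega>) (\<lambda>x. f x * (cutoff_rise s e x - cutoff_fall t e x))
      = integral\<^sup>L (lebesgue_on {s..t}) (\<lambda>x. f x * (cutoff_rise s e x - cutoff_fall t e x))"
  proof (rule integral_lebesgue_on_vanishing_outside)
    show "f x * (cutoff_rise s e x - cutoff_fall t e x) = 0" if "x \<notin> {s..t}" for x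
    proof -
      have "x \<notin> {s<..<s + e}" "x \<notin> {t - e<..<t}"
        using that e by auto
      then show ?thesis
        using cutoff_rise_eq_0[OF e(1)] cutoff_fall_eq_0[OF e(1)] by simp
    qed
  qed (use assms in auto)
  moreover have "integral\<^sup>L (lebesgue_on \<Omega>) (\<lambda>x. g x * cutoff s t e x)
      = integral\<^sup>L (lebesgue_on {s..t}) (\<lambda>x. g x * cutoff s t e x)"
  proof (rule integral_lebesgue_on_vanishing_outside)
    show "g x * cutoff s t e x = 0" if "x \<notin> {s..t}" for x
    proof -
      have "x \<notin> {s<..<t}"
        using that by auto
      then show ?thesis
        using cutoff_eq_0[OF e(1)] by simp
    qed
  qed (use assms in auto)
  ultimately show ?thesis
    by simp
qed

lemma integrable_mult_continuous:
  fixes f h :: "real \<Rightarrow> real"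
  assumes f: "integrable (lebesgue_on {a..b}) f" and h: "continuous_on {a..b} h"
  shows "integrable (lebesgue_on {a..b}) (\<lambda>x. f x * h x)"
proof -
  obtain B where B: "\<And>y. y \<in> h ` {a..b} \<Longrightarrow> norm y \<le> B"
    using compact_imp_bounded[OF compact_continuous_image[OF h]] bounded_iff by (metis compact_Icc)
  show ?thesis
  proof (rule Bochner_Integration.integrable_bound)
    show "integrable (lebesgue_on {a..b}) (\<lambda>x. B * \<bar>f x\<bar>)"
      using f by simp
    have "h \<in> borel_measurable (lebesgue_on {a..b})"
      by (intro continuous_imp_measurable_on_sets_lebesgue h) auto
    then show "(\<lambda>x. f x * h x) \<in> borel_measurable (lebesgue_on {a..b})"
      using f by (intro borel_measurable_times) auto
    show "AE x in lebesgue_on {a..b}. norm (f x * h x) \<le> norm (B * \<bar>f x\<bar>)"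
    proof (rule AE_I2)
      fix x
      assume "x \<in> space (lebesgue_on {a..b})"
      then have "\<bar>h x\<bar> \<le> B"
        using B by auto
      then have "0 \<le> B" "\<bar>f x\<bar> * \<bar>h x\<bar> \<le> \<bar>f x\<bar> * B"
        by (auto intro: order_trans[OF abs_ge_zero] mult_left_mono)
      then show "norm (f x * h x) \<le> norm (B * \<bar>f x\<bar>)"
        by (simp add: abs_mult mult.commute)
    qed
  qed
qed

lemma abs_integral_mult_le:
  fixes f h :: "real \<Rightarrow> real"
  assumes f: "integrable (lebesgue_on {a..b}) f" and h: "continuous_on {a..b} h"
    and B: "\<And>x. x \<in> {a..b} \<Longrightarrow> \<bar>h x\<bar> \<le> B"
  shows "\<bar>integral\<^sup>L (lebesgue_on {a..b}) (\<lambda>x. f x * h x)\<bar> \<le> B * integral\<^sup>L (lebesgue_on {a..b}) (\<lambda>x. \<bar>f x\<bar>)"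
proof -
  let ?L = "lebesgue_on {a..b}"
  have "\<bar>integral\<^sup>L ?L (\<lambda>x. f x * h x)\<bar> \<le> integral\<^sup>L ?L (\<lambda>x. \<bar>f x * h x\<bar>)"
    using integral_abs_bound by blast
  also have "\<dots> \<le> integral\<^sup>L ?L (\<lambda>x. B * \<bar>f x\<bar>)"
  proof (rule integral_mono)
    show "integrable ?L (\<lambda>x. \<bar>f x * h x\<bar>)"
      using integrable_mult_continuous[OF f h] by simp
    show "integrable ?L (\<lambda>x. B * \<bar>f x\<bar>)"
      using f by simp
    fix x
    assume "x \<in> space ?L"
    then have "\<bar>h x\<bar> \<le> B"
      using B by simp
    then show "\<bar>f x * h x\<bar> \<le> B * \<bar>f x\<bar>"
      by (metis abs_ge_zero abs_mult mult.commute mult_left_mono)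
  qed
  finally show ?thesis
    by simp
qed

lemma weighted_average_dist_le:
  fixes f w :: "real \<Rightarrow> real"
  assumes "continuous_on {a..b} f" "continuous_on {a..b} w"
    and "\<And>x. x \<in> {a..b} \<Longrightarrow> 0 \<le> w x" "integral\<^sup>L (lebesgue_on {a..b}) w = 1"
    and "\<And>x. x \<in> {a..b} \<Longrightarrow> \<bar>f x - c\<bar> \<le> \<eta>"
  shows "\<bar>integral\<^sup>L (lebesgue_on {a..b}) (\<lambda>x. f x * w x) - c\<bar> \<le> \<eta>"
proof -
  let ?L = "lebesgue_on {a..b}"
  have iw: "integrable ?L w" and ifw: "integrable ?L (\<lambda>x. f x * w x)"
    using assms by (auto intro!: continuous_imp_integrable_real continuous_on_mult)
  have "integral\<^sup>L ?L (\<lambda>x. f x * w x) - c = integral\<^sup>L ?L (\<lambda>x. (f x - c) * w x)"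
    using assms(4) iw ifw by (simp add: left_diff_distrib)
  also have "\<dots> = integral\<^sup>L ?L (\<lambda>x. w x * (f x - c))"
    by (simp add: mult.commute)
  also have "\<bar>\<dots>\<bar> \<le> \<eta> * integral\<^sup>L ?L (\<lambda>x. \<bar>w x\<bar>)"
    using assms(5) by (intro abs_integral_mult_le[OF iw continuous_on_diff[OF assms(1) continuous_on_const]])
  also have "integral\<^sup>L ?L (\<lambda>x. \<bar>w x\<bar>) = integral\<^sup>L ?L w"
  proof (rule Bochner_Integration.integral_cong)
    show "\<bar>w x\<bar> = w x" if "x \<in> space ?L" for x
      using that assms(3)[of x] by simp
  qed simp
  finally show ?thesis
    using assms(4) by simp
qed

lemma integral_cutoff_rise_average:
  fixes f :: "real \<Rightarrow> real"
  assumes e: "0 < e" "s + e \<le> t" and f: "continuous_on {s..t} f"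
    and near: "\<And>x. x \<in> {s..s + e} \<Longrightarrow> \<bar>f x - f s\<bar> \<le> \<eta>"
  shows "\<bar>integral\<^sup>L (lebesgue_on {s..t}) (\<lambda>x. f x * cutoff_rise s e x) - f s\<bar> \<le> \<eta>"
proof -
  have "integral\<^sup>L (lebesgue_on {s..t}) (\<lambda>x. f x * cutoff_rise s e x)
      = integral\<^sup>L (lebesgue_on {s..s + e}) (\<lambda>x. f x * cutoff_rise s e x)"
  proof (rule integral_lebesgue_on_vanishing_outside)
    show "f x * cutoff_rise s e x = 0" if "x \<notin> {s..s + e}" for x
    proof -
      have "x \<notin> {s<..<s + e}"
        using that by auto
      then show ?thesis
        using cutoff_rise_eq_0[OF e(1)] by simp
    qed
  qed (use e in auto)
  moreover have "\<bar>integral\<^sup>L (lebesgue_on {s..s + e}) (\<lambda>x. f x * cutoff_rise s e x) - f s\<bar> \<le> \<eta>"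
    using e near integral_cutoff_rise[OF e(1)] cutoff_rise_nonneg[OF e(1)]
    by (intro weighted_average_dist_le continuous_on_subset[OF f] continuous_on_cutoff_rise) auto
  ultimately show ?thesis
    by simp
qed

lemma integral_cutoff_fall_average:
  fixes f :: "real \<Rightarrow> real"
  assumes e: "0 < e" "s \<le> t - e" and f: "continuous_on {s..t} f"
    and near: "\<And>x. x \<in> {t - e..t} \<Longrightarrow> \<bar>f x - f t\<bar> \<le> \<eta>"
  shows "\<bar>integral\<^sup>L (lebesgue_on {s..t}) (\<lambda>x. f x * cutoff_fall t e x) - f t\<bar> \<le> \<eta>"
proof -
  have "integral\<^sup>L (lebesgue_on {s..t}) (\<lambda>x. f x * cutoff_fall t e x)
      = integral\<^sup>L (lebesgue_on {t - e..t}) (\<lambda>x. f x * cutoff_fall t e x)"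
  proof (rule integral_lebesgue_on_vanishing_outside)
    show "f x * cutoff_fall t e x = 0" if "x \<notin> {t - e..t}" for x
    proof -
      have "x \<notin> {t - e<..<t}"
        using that by auto
      then show ?thesis
        using cutoff_fall_eq_0[OF e(1)] by simp
    qed
  qed (use e in auto)
  moreover have "\<bar>integral\<^sup>L (lebesgue_on {t - e..t}) (\<lambda>x. f x * cutoff_fall t e x) - f t\<bar> \<le> \<eta>"
    using e near integral_cutoff_fall[OF e(1)] cutoff_fall_nonneg[OF e(1)]
    by (intro weighted_average_dist_le continuous_on_subset[OF f] continuous_on_cutoff_fall) auto
  ultimately show ?thesis
    by simp
qed

lemma abs_cutoff_le_1: "\<bar>cutoff s t e x\<bar> \<le> 1"
  using cutoff_nonneg cutoff_le_1 by (simp add: abs_le_iff order_trans[OF _ cutoff_nonneg])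

text \<open>Test against cutoffs whose slopes concentrate at the endpoints, where \<open>f\<close> is nearly constant.\<close>
lemma weak_derivative_oscillation:
  fixes f g :: "real \<Rightarrow> real"
  assumes wp: "weak_partial \<Omega> f 1 g" and \<Omega>: "open \<Omega>" "{s..t} \<subseteq> \<Omega>" and "s < t"
    and f: "continuous_on {s..t} f"
  shows "\<bar>f t - f s\<bar> \<le> integral\<^sup>L (lebesgue_on {s..t}) (\<lambda>x. \<bar>g x\<bar>)"
proof (rule field_le_epsilon)
  fix \<eta> :: real
  assume "0 < \<eta>"
  then obtain d where "0 < d"
    and d: "\<And>x y. x \<in> {s..t} \<Longrightarrow> y \<in> {s..t} \<Longrightarrow> dist y x < d \<Longrightarrow> dist (f y) (f x) < \<eta> / 2"
    using compact_uniformly_continuous[OF f compact_Icc]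
    unfolding uniformly_continuous_on_def by (meson half_gt_zero)
  define e where "e = min (d / 2) ((t - s) / 3)"
  have e: "0 < e" "3 * e \<le> t - s" "e < d"
    using \<open>0 < d\<close> \<open>s < t\<close> by (auto simp: e_def min_def)
  let ?L = "lebesgue_on {s..t}"
  have rise: "\<bar>integral\<^sup>L ?L (\<lambda>x. f x * cutoff_rise s e x) - f s\<bar> \<le> \<eta> / 2"
  proof (rule integral_cutoff_rise_average[OF e(1) _ f])
    show "\<bar>f x - f s\<bar> \<le> \<eta> / 2" if "x \<in> {s..s + e}" for x
      using d[of s x] that e by (simp add: dist_real_def)
  qed (use e in simp)
  have fall: "\<bar>integral\<^sup>L ?L (\<lambda>x. f x * cutoff_fall t e x) - f t\<bar> \<le> \<eta> / 2"
  proof (rule integral_cutoff_fall_average[OF e(1) _ f])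
    show "\<bar>f x - f t\<bar> \<le> \<eta> / 2" if "x \<in> {t - e..t}" for x
      using d[of t x] that e by (simp add: dist_real_def)
  qed (use e in simp)
  have "integral\<^sup>L ?L (\<lambda>x. f x * (cutoff_rise s e x - cutoff_fall t e x))
      = integral\<^sup>L ?L (\<lambda>x. f x * cutoff_rise s e x) - integral\<^sup>L ?L (\<lambda>x. f x * cutoff_fall t e x)"
    using f by (simp add: right_diff_distrib continuous_imp_integrable_real continuous_on_mult
                          continuous_on_cutoff_rise continuous_on_cutoff_fall)
  moreover have "\<bar>integral\<^sup>L ?L (\<lambda>x. f x * (cutoff_rise s e x - cutoff_fall t e x))\<bar>
      \<le> integral\<^sup>L ?L (\<lambda>x. \<bar>g x\<bar>)"
    using weak_partial_cutoff[OF wp \<Omega> e(1,2)]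
      abs_integral_mult_le[OF weak_partial_integrable(2)[OF wp compact_Icc \<Omega>(2)] continuous_on_cutoff
        abs_cutoff_le_1]
    by simp
  ultimately show "\<bar>f t - f s\<bar> \<le> integral\<^sup>L ?L (\<lambda>x. \<bar>g x\<bar>) + \<eta>"
    using rise fall by linarith
qed

lemma abs_cutoff_slope_le:
  assumes "0 < e"
  shows "\<bar>cutoff_rise s e x - cutoff_fall t e x\<bar> \<le> step_slope / e"
  using cutoff_rise_nonneg[OF assms, of s x] cutoff_fall_nonneg[OF assms, of t x]
    cutoff_rise_le[OF assms, of s x] cutoff_fall_le[OF assms, of t x]
  unfolding abs_le_iff by linarith

lemma integral_times_cutoff_ge:
  fixes F :: "real \<Rightarrow> real"
  assumes F: "continuous_on {a..b} F" and "a < b" "0 \<le> c" and ge: "\<And>x. x \<in> {a..b} \<Longrightarrow> c \<le> F x"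
  shows "c * (b - a) / 3 \<le> integral\<^sup>L (lebesgue_on {a..b}) (\<lambda>x. F x * cutoff a b ((b - a) / 3) x)"
proof -
  define e where "e = (b - a) / 3"
  let ?L = "lebesgue_on {a..b}"
  have "0 < e" "b - a = 3 * e"
    using \<open>a < b\<close> by (simp_all add: e_def)
  then have "b - a - 2 * e \<le> integral\<^sup>L ?L (cutoff a b e)"
    by (intro integral_cutoff_ge) simp_all
  then have "e \<le> integral\<^sup>L ?L (cutoff a b e)"
    using \<open>b - a = 3 * e\<close> by linarith
  then have "c * (b - a) / 3 \<le> integral\<^sup>L ?L (\<lambda>x. c * cutoff a b e x)"
    using \<open>b - a = 3 * e\<close> \<open>0 \<le> c\<close> by (simp add: mult_left_mono)
  also have "\<dots> \<le> integral\<^sup>L ?L (\<lambda>x. F x * cutoff a b e x)"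
  proof (rule integral_mono)
    show "c * cutoff a b e x \<le> F x * cutoff a b e x" if "x \<in> space ?L" for x
      using that ge[of x] cutoff_nonneg[of a b e x] by (simp add: mult_right_mono)
  qed (use F in \<open>auto intro!: continuous_imp_integrable_real continuous_intros continuous_on_cutoff\<close>)
  finally show ?thesis
    by (simp add: e_def)
qed

text \<open>Test \<open>u' + F\<close> against a cutoff and move the derivative onto the cutoff.\<close>
lemma misfit_lower_bound:
  fixes u du F :: "real \<Rightarrow> real"
  assumes wp: "weak_partial \<Omega> u 1 du" and \<Omega>: "open \<Omega>" "{a..b} \<subseteq> \<Omega>" and "a < b"
    and F: "continuous_on {a..b} F"
    and sign: "\<bar>\<sigma>\<bar> \<le> 1" "0 \<le> c" "\<And>x. x \<in> {a..b} \<Longrightarrow> c \<le> \<sigma> * F x"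
  shows "c * (b - a) / 3 \<le> integral\<^sup>L (lebesgue_on {a..b}) (\<lambda>x. \<bar>du x + F x\<bar>)
           + 3 * step_slope / (b - a) * integral\<^sup>L (lebesgue_on {a..b}) (\<lambda>x. \<bar>u x\<bar>)"
proof -
  define e where "e = (b - a) / 3"
  have e: "0 < e" "3 * e \<le> b - a"
    using \<open>a < b\<close> by (auto simp: e_def)
  let ?L = "lebesgue_on {a..b}"
  let ?\<phi> = "cutoff a b e"
  have iu: "integrable ?L u" and idu: "integrable ?L du"
    using weak_partial_integrable[OF wp compact_Icc \<Omega>(2)] by auto
  have "c * (b - a) / 3 \<le> integral\<^sup>L ?L (\<lambda>x. \<sigma> * F x * ?\<phi> x)"
    unfolding e_def using F sign(2,3) \<open>a < b\<close>
    by (intro integral_times_cutoff_ge) (auto intro: continuous_intros)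
  also have "\<dots> = \<sigma> * integral\<^sup>L ?L (\<lambda>x. F x * ?\<phi> x)"
    by (simp add: mult.assoc)
  also have "\<dots> = \<sigma> * (integral\<^sup>L ?L (\<lambda>x. (du x + F x) * ?\<phi> x)
      + integral\<^sup>L ?L (\<lambda>x. u x * (cutoff_rise a e x - cutoff_fall b e x)))"
    using weak_partial_cutoff[OF wp \<Omega> e] integrable_mult_continuous[OF idu continuous_on_cutoff]
      continuous_imp_integrable_real[OF continuous_on_mult[OF F continuous_on_cutoff]]
    by (simp add: distrib_right)
  also have "\<dots> \<le> \<bar>integral\<^sup>L ?L (\<lambda>x. (du x + F x) * ?\<phi> x)\<bar>
      + \<bar>integral\<^sup>L ?L (\<lambda>x. u x * (cutoff_rise a e x - cutoff_fall b e x))\<bar>"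
  proof -
    have "\<sigma> * z \<le> \<bar>z\<bar>" for z
    proof -
      have "\<sigma> * z \<le> \<bar>\<sigma>\<bar> * \<bar>z\<bar>"
        by (metis abs_ge_self abs_mult)
      also have "\<dots> \<le> \<bar>z\<bar>"
        using sign(1) by (simp add: mult_left_le_one_le)
      finally show ?thesis .
    qed
    then show ?thesis
      by (rule order_trans[OF _ abs_triangle_ineq])
  qed
  also have "\<dots> \<le> 1 * integral\<^sup>L ?L (\<lambda>x. \<bar>du x + F x\<bar>) + step_slope / e * integral\<^sup>L ?L (\<lambda>x. \<bar>u x\<bar>)"
    using abs_integral_mult_le[OF _ continuous_on_cutoff abs_cutoff_le_1]
      abs_integral_mult_le[OF iu continuous_on_diff[OF continuous_on_cutoff_rise continuous_on_cutoff_fall]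
        abs_cutoff_slope_le[OF e(1)]] idu F
    by (intro add_mono) (auto simp: continuous_imp_integrable_real)
  finally show ?thesis
    by (simp add: e_def)
qed

section \<open>Energy estimates\<close>

lemma nn_integral_le_imp_integral_le:
  fixes F :: "'a \<Rightarrow> real"
  assumes F: "F \<in> borel_measurable M" "\<And>x. x \<in> space M \<Longrightarrow> 0 \<le> F x"
    and le: "(\<integral>\<^sup>+x. ennreal (F x) \<partial>M) \<le> ennreal c" and "0 \<le> c"
  shows "integrable M F" "integral\<^sup>L M F \<le> c"
proof -
  have "(\<integral>\<^sup>+x. ennreal (F x) \<partial>M) < \<infinity>"
    using le by (simp add: le_less_trans)
  then show "integrable M F"
    using F by (intro integrableI_nonneg) (auto intro: AE_I2)
  have "integral\<^sup>L M F = enn2real (\<integral>\<^sup>+x. ennreal (F x) \<partial>M)"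
    using F by (intro integral_eq_nn_integral) (auto intro: AE_I2)
  also have "\<dots> \<le> c"
    using le \<open>0 \<le> c\<close> enn2real_mono[OF le] by simp
  finally show "integral\<^sup>L M F \<le> c" .
qed

lemma integral_abs_le_amgm:
  fixes f :: "real \<Rightarrow> real"
  assumes f: "integrable (lebesgue_on {a..b}) f" "integrable (lebesgue_on {a..b}) (\<lambda>x. (f x)\<^sup>2)"
    and B: "integral\<^sup>L (lebesgue_on {a..b}) (\<lambda>x. (f x)\<^sup>2) \<le> B" and "a \<le> b" "0 < k"
  shows "integral\<^sup>L (lebesgue_on {a..b}) (\<lambda>x. \<bar>f x\<bar>) \<le> k / 2 * B + (b - a) / (2 * k)"
proof -
  let ?L = "lebesgue_on {a..b}"
  have "integral\<^sup>L ?L (\<lambda>x. \<bar>f x\<bar>) \<le> integral\<^sup>L ?L (\<lambda>x. k / 2 * (f x)\<^sup>2 + 1 / (2 * k))"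
  proof (rule integral_mono)
    show "\<bar>f x\<bar> \<le> k / 2 * (f x)\<^sup>2 + 1 / (2 * k)" for x
    proof -
      have "2 * k * \<bar>f x\<bar> \<le> k\<^sup>2 * (f x)\<^sup>2 + 1"
        using sum_squares_bound[of "k * \<bar>f x\<bar>" 1] by (simp add: power_mult_distrib)
      then show ?thesis
        using \<open>0 < k\<close> by (simp add: field_simps power2_eq_square)
    qed
  qed (use f in simp_all)
  also have "\<dots> = k / 2 * integral\<^sup>L ?L (\<lambda>x. (f x)\<^sup>2) + (b - a) / (2 * k)"
    using f \<open>a \<le> b\<close> by (simp add: measure_restrict_space)
  also have "\<dots> \<le> k / 2 * B + (b - a) / (2 * k)"
    using B \<open>0 < k\<close> by simp
  finally show ?thesis .
qed

definition energy_density ::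
    "real \<Rightarrow> (real \<Rightarrow> real) \<Rightarrow> (real \<Rightarrow> real) \<Rightarrow> (real \<Rightarrow> real) \<Rightarrow> (real \<Rightarrow> real) \<Rightarrow> real \<Rightarrow> real" where
  "energy_density h u du dw ddw r =
     (u r)\<^sup>2 / r + r * (du r + (dw r)\<^sup>2 - 1)\<^sup>2 + h\<^sup>2 * (r * (ddw r)\<^sup>2 + (dw r)\<^sup>2 / r)"

lemma integral_le_energy:
  fixes G :: "real \<Rightarrow> real"
  assumes En: "energy h u du dw ddw \<le> ennreal e" "0 \<le> e" and pq: "0 < p" "q < 1"
    and G: "G \<in> borel_measurable (lebesgue_on {p..q})" "0 < c"
    and nonneg: "\<And>x. x \<in> {p..q} \<Longrightarrow> 0 \<le> G x"
    and le: "\<And>x. x \<in> {p..q} \<Longrightarrow> c * G x \<le> energy_density h u du dw ddw x"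
  shows "integrable (lebesgue_on {p..q}) G" "integral\<^sup>L (lebesgue_on {p..q}) G \<le> e / c"
proof -
  let ?K = "lebesgue_on {p..q}"
  have "(\<integral>\<^sup>+x. ennreal (c * G x) \<partial>?K) \<le> (\<integral>\<^sup>+x. ennreal (energy_density h u du dw ddw x) \<partial>?K)"
    using le by (intro nn_integral_mono) (simp add: ennreal_leI)
  also have "\<dots> \<le> (\<integral>\<^sup>+x. ennreal (energy_density h u du dw ddw x) \<partial>lebesgue_on {0<..<1})"
    using pq by (simp add: nn_integral_restrict_space nn_set_integral_set_mono subset_eq)
  also have "\<dots> \<le> ennreal e"
    using En by (simp add: energy_def energy_density_def)
  finally have "(\<integral>\<^sup>+x. ennreal (c * G x) \<partial>?K) \<le> ennreal e" .
  then have "integrable ?K (\<lambda>x. c * G x)" "integral\<^sup>L ?K (\<lambda>x. c * G x) \<le> e"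
    using nn_integral_le_imp_integral_le[of "\<lambda>x. c * G x" ?K e] G nonneg En(2) by auto
  then show "integrable ?K G" "integral\<^sup>L ?K G \<le> e / c"
    using \<open>0 < c\<close> by (simp_all add: field_simps)
qed

lemma energy_density_ge:
  assumes "0 < r"
  shows "(u r)\<^sup>2 / r \<le> energy_density h u du dw ddw r"
    "r * (du r + (dw r)\<^sup>2 - 1)\<^sup>2 \<le> energy_density h u du dw ddw r"
    "h\<^sup>2 * r * (ddw r)\<^sup>2 \<le> energy_density h u du dw ddw r"
  using assms by (auto simp: energy_density_def distrib_left mult.assoc)

lemma bending_integral_le:
  fixes dw ddw :: "real \<Rightarrow> real"
  assumes En: "energy h u du dw ddw \<le> ennreal e" "0 \<le> e"
    and wp: "weak_partial {0<..<1} dw 1 ddw" and pq: "0 < p" "p \<le> q" "q < 1" and "0 < h"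
  shows "integrable (lebesgue_on {p..q}) (\<lambda>x. (ddw x)\<^sup>2)"
    "integral\<^sup>L (lebesgue_on {p..q}) (\<lambda>x. (ddw x)\<^sup>2) \<le> e / (h\<^sup>2 * p)"
proof -
  have "integrable (lebesgue_on {p..q}) ddw"
    by (rule weak_partial_integrable(2)[OF wp compact_Icc]) (use pq in auto)
  then have meas: "(\<lambda>x. (ddw x)\<^sup>2) \<in> borel_measurable (lebesgue_on {p..q})"
    by measurable
  have le: "h\<^sup>2 * p * (ddw x)\<^sup>2 \<le> energy_density h u du dw ddw x" if "x \<in> {p..q}" for x
  proof -
    have "h\<^sup>2 * p * (ddw x)\<^sup>2 \<le> h\<^sup>2 * x * (ddw x)\<^sup>2"
      by (rule mult_right_mono[OF mult_left_mono]) (use that in auto)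
    also have "\<dots> \<le> energy_density h u du dw ddw x"
      using that pq by (intro energy_density_ge(3)) simp
    finally show ?thesis .
  qed
  have "0 < h\<^sup>2 * p"
    using \<open>0 < h\<close> pq by simp
  then show "integrable (lebesgue_on {p..q}) (\<lambda>x. (ddw x)\<^sup>2)"
    "integral\<^sup>L (lebesgue_on {p..q}) (\<lambda>x. (ddw x)\<^sup>2) \<le> e / (h\<^sup>2 * p)"
    using integral_le_energy[OF En pq(1,3) meas _ _ le] by auto
qed

lemma misfit_integral_le:
  fixes u du dw :: "real \<Rightarrow> real"
  assumes En: "energy h u du dw ddw \<le> ennreal e" "0 \<le> e"
    and wp: "weak_partial {0<..<1} u 1 du" and dw: "continuous_on {p..q} dw"
    and pq: "0 < p" "p \<le> q" "q < 1"
  shows "integrable (lebesgue_on {p..q}) (\<lambda>x. (du x + (dw x)\<^sup>2 - 1)\<^sup>2)"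
    "integral\<^sup>L (lebesgue_on {p..q}) (\<lambda>x. (du x + (dw x)\<^sup>2 - 1)\<^sup>2) \<le> e / p"
proof -
  have "integrable (lebesgue_on {p..q}) du"
    by (rule weak_partial_integrable(2)[OF wp compact_Icc]) (use pq in auto)
  moreover have "dw \<in> borel_measurable (lebesgue_on {p..q})"
    by (intro continuous_imp_measurable_on_sets_lebesgue dw) auto
  ultimately have meas: "(\<lambda>x. (du x + (dw x)\<^sup>2 - 1)\<^sup>2) \<in> borel_measurable (lebesgue_on {p..q})"
    by measurable
  have le: "p * (du x + (dw x)\<^sup>2 - 1)\<^sup>2 \<le> energy_density h u du dw ddw x" if "x \<in> {p..q}" for x
  proof -
    have "p * (du x + (dw x)\<^sup>2 - 1)\<^sup>2 \<le> x * (du x + (dw x)\<^sup>2 - 1)\<^sup>2"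
      by (rule mult_right_mono) (use that in auto)
    also have "\<dots> \<le> energy_density h u du dw ddw x"
      using that pq by (intro energy_density_ge(2)) simp
    finally show ?thesis .
  qed
  show "integrable (lebesgue_on {p..q}) (\<lambda>x. (du x + (dw x)\<^sup>2 - 1)\<^sup>2)"
    "integral\<^sup>L (lebesgue_on {p..q}) (\<lambda>x. (du x + (dw x)\<^sup>2 - 1)\<^sup>2) \<le> e / p"
    using integral_le_energy[OF En pq(1,3) meas pq(1) _ le] by auto
qed

lemma displacement_integral_le:
  fixes u du :: "real \<Rightarrow> real"
  assumes En: "energy h u du dw ddw \<le> ennreal e" "0 \<le> e"
    and wp: "weak_partial {0<..<1} u 1 du" and pq: "0 < p" "p \<le> q" "q < 1"
  shows "integrable (lebesgue_on {p..q}) (\<lambda>x. (u x)\<^sup>2)"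
    "integral\<^sup>L (lebesgue_on {p..q}) (\<lambda>x. (u x)\<^sup>2) \<le> q * e"
proof -
  have "integrable (lebesgue_on {p..q}) u"
    by (rule weak_partial_integrable(1)[OF wp compact_Icc]) (use pq in auto)
  then have meas: "(\<lambda>x. (u x)\<^sup>2) \<in> borel_measurable (lebesgue_on {p..q})"
    by measurable
  have le: "1 / q * (u x)\<^sup>2 \<le> energy_density h u du dw ddw x" if "x \<in> {p..q}" for x
  proof -
    have "1 / q * (u x)\<^sup>2 \<le> (u x)\<^sup>2 / x"
      using that pq by (simp add: divide_left_mono frac_le)
    also have "\<dots> \<le> energy_density h u du dw ddw x"
      using that pq by (intro energy_density_ge(1)) simp
    finally show ?thesis .
  qed
  have "0 < 1 / q"
    using pq by simp
  then have "integrable (lebesgue_on {p..q}) (\<lambda>x. (u x)\<^sup>2)"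
    "integral\<^sup>L (lebesgue_on {p..q}) (\<lambda>x. (u x)\<^sup>2) \<le> e / (1 / q)"
    using integral_le_energy[OF En pq(1,3) meas _ _ le] by auto
  then show "integrable (lebesgue_on {p..q}) (\<lambda>x. (u x)\<^sup>2)"
    "integral\<^sup>L (lebesgue_on {p..q}) (\<lambda>x. (u x)\<^sup>2) \<le> q * e"
    by (simp_all add: mult.commute)
qed

section \<open>The length scale near \<open>\<tau>\<close>\<close>

lemma left_limit_abs_diff_le:
  fixes f :: "real \<Rightarrow> real"
  assumes f: "continuous_on {x..T} f" and "x < T"
    and bound: "\<And>t. t \<in> {x<..<T} \<Longrightarrow> \<bar>f t - f x\<bar> \<le> \<beta>"
  shows "\<bar>f T - f x\<bar> \<le> \<beta>"
proof -
  have "(f \<longlongrightarrow> f T) (at T within {x<..<T})"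
    using f \<open>x < T\<close> unfolding continuous_on_def
    by (auto intro: tendsto_within_subset[of _ _ _ "{x..T}"])
  then have "((\<lambda>t. \<bar>f t - f x\<bar>) \<longlongrightarrow> \<bar>f T - f x\<bar>) (at T within {x<..<T})"
    by (intro tendsto_intros)
  moreover have "eventually (\<lambda>t. \<bar>f t - f x\<bar> \<le> \<beta>) (at T within {x<..<T})"
    using bound by (auto simp: eventually_at_filter)
  moreover have "\<not> trivial_limit (at T within {x<..<T})"
    using \<open>x < T\<close> by (simp add: trivial_limit_within islimpt_greaterThanLessThan2)
  ultimately show ?thesis
    by (rule tendsto_upperbound)
qed

lemma slope_variation_le_quarter:
  fixes dw ddw :: "real \<Rightarrow> real"
  assumes En: "energy h u du dw ddw \<le> ennreal e" "0 \<le> e"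
    and wp: "weak_partial {0<..<1} dw 1 ddw" and dw: "continuous_on {0<..1} dw"
    and T: "0 < T" "T \<le> 1" and "0 < h"
    and l: "0 < l" "l \<le> T / 2" "32 * l * e \<le> h\<^sup>2 * T"
    and x: "T - l \<le> x" "x < T"
  shows "\<bar>dw T - dw x\<bar> \<le> 1/4"
proof (rule left_limit_abs_diff_le[OF _ x(2)])
  have "T / 2 \<le> x"
    using l x by linarith
  then have "0 < x"
    using T by linarith
  then show "continuous_on {x..T} dw"
    using T by (auto intro: continuous_on_subset[OF dw])
  fix t
  assume t: "t \<in> {x<..<T}"
  then have "t < 1"
    using T by simp
  have sub: "{x..t} \<subseteq> {0<..<1}"
    using \<open>0 < x\<close> \<open>t < 1\<close> by auto
  have "\<bar>dw t - dw x\<bar> \<le> integral\<^sup>L (lebesgue_on {x..t}) (\<lambda>y. \<bar>ddw y\<bar>)"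
    using t \<open>0 < x\<close> \<open>t < 1\<close>
    by (intro weak_derivative_oscillation[OF wp] continuous_on_subset[OF dw]) auto
  also have "\<dots> \<le> 4 * l / 2 * (e / (h\<^sup>2 * x)) + (t - x) / (2 * (4 * l))"
    using t l \<open>0 < x\<close> \<open>t < 1\<close> \<open>0 < h\<close> weak_partial_integrable(2)[OF wp compact_Icc sub]
      bending_integral_le[OF En wp, of x t]
    by (intro integral_abs_le_amgm) auto
  also have "\<dots> \<le> 1/8 + 1/8"
  proof (rule add_mono)
    have "16 * l * e \<le> h\<^sup>2 * x"
      using l(3) mult_left_mono[OF \<open>T / 2 \<le> x\<close>, of "h\<^sup>2"] by simp
    then show "4 * l / 2 * (e / (h\<^sup>2 * x)) \<le> 1/8"
      using \<open>0 < h\<close> \<open>0 < x\<close> by (simp add: field_simps)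
    show "(t - x) / (2 * (4 * l)) \<le> 1/8"
      using t x l by (simp add: field_simps)
  qed
  finally show "\<bar>dw t - dw x\<bar> \<le> 1/4"
    by simp
qed

lemma sign_of_square_minus_one:
  assumes "y \<notin> Wset" "\<bar>y - z\<bar> \<le> 1/4"
  shows "7/16 \<le> (if \<bar>y\<bar> \<le> 1/2 then -1 else 1) * (z\<^sup>2 - 1)"
proof (cases "\<bar>y\<bar> \<le> 1/2")
  case True
  then have "\<bar>z\<bar> \<le> 3/4"
    using assms(2) by linarith
  then have "z\<^sup>2 \<le> (3/4)\<^sup>2"
    by (metis abs_ge_zero power2_abs power_mono)
  then show ?thesis
    using True by (simp add: power2_eq_square)
next
  case False
  then have "3/2 \<le> \<bar>y\<bar>"
    using assms(1) by (auto simp: Wset_def abs_if)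
  then have "5/4 \<le> \<bar>z\<bar>"
    using assms(2) by linarith
  then have "(5/4)\<^sup>2 \<le> z\<^sup>2"
    by (metis power2_abs power_mono zero_le_divide_iff zero_le_numeral)
  then show ?thesis
    using False by (simp add: power2_eq_square)
qed

lemma misfit_lower_bound_near_exit:
  fixes u du dw ddw :: "real \<Rightarrow> real"
  assumes En: "energy h u du dw ddw \<le> ennreal e" "0 \<le> e"
    and wpu: "weak_partial {0<..<1} u 1 du" and wpd: "weak_partial {0<..<1} dw 1 ddw"
    and dw: "continuous_on {0<..1} dw"
    and T: "0 < T" "T \<le> 1" "dw T \<notin> Wset" and "0 < h"
    and l: "0 < l" "l \<le> T / 2" "32 * l * e \<le> h\<^sup>2 * T"
  shows "7/96 * l \<le> integral\<^sup>L (lebesgue_on {T - l..T - l/2}) (\<lambda>x. \<bar>du x + (dw x)\<^sup>2 - 1\<bar>)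
           + 6 * step_slope / l * integral\<^sup>L (lebesgue_on {T - l..T - l/2}) (\<lambda>x. \<bar>u x\<bar>)"
proof -
  define \<sigma> :: real where "\<sigma> = (if \<bar>dw T\<bar> \<le> 1/2 then -1 else 1)"
  have sign: "7/16 \<le> \<sigma> * ((dw x)\<^sup>2 - 1)" if "x \<in> {T - l..T - l/2}" for x
    unfolding \<sigma>_def using that l
    by (intro sign_of_square_minus_one[OF T(3)] slope_variation_le_quarter[OF En wpd dw T(1,2) \<open>0 < h\<close> l])
       auto
  have sub: "{T - l..T - l/2} \<subseteq> {0<..<1}" and lt: "T - l < T - l/2"
    using T l by auto
  have cont: "continuous_on {T - l..T - l/2} (\<lambda>x. (dw x)\<^sup>2 - 1)"
    using T l by (intro continuous_intros continuous_on_subset[OF dw]) auto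
  have "\<bar>\<sigma>\<bar> \<le> 1"
    by (simp add: \<sigma>_def)
  from misfit_lower_bound[OF wpu open_greaterThanLessThan sub lt cont this _ sign]
  have "7/16 * (T - l/2 - (T - l)) / 3
      \<le> integral\<^sup>L (lebesgue_on {T - l..T - l/2}) (\<lambda>x. \<bar>du x + ((dw x)\<^sup>2 - 1)\<bar>)
        + 3 * step_slope / (T - l/2 - (T - l)) * integral\<^sup>L (lebesgue_on {T - l..T - l/2}) (\<lambda>x. \<bar>u x\<bar>)"
    by simp
  moreover have "T - l/2 - (T - l) = l / 2"
    by simp
  ultimately show ?thesis
    by (simp add: add_diff_eq)
qed

lemma length_scale_bound:
  fixes u du dw ddw :: "real \<Rightarrow> real"
  assumes En: "energy h u du dw ddw \<le> ennreal e" "0 \<le> e"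
    and wpu: "weak_partial {0<..<1} u 1 du" and wpd: "weak_partial {0<..<1} dw 1 ddw"
    and dw: "continuous_on {0<..1} dw"
    and T: "0 < T" "T \<le> 1" "dw T \<notin> Wset" and "0 < h"
    and l: "0 < l" "l \<le> T / 2" "32 * l * e \<le> h\<^sup>2 * T"
  shows "l \<le> 6800 * step_slope\<^sup>2 * (e / T + T * e / l\<^sup>2)"
proof -
  define a b where "a = T - l" and "b = T - l / 2"
  have ab: "0 < a" "a < b" "b < 1" "b - a = l / 2" "T / 2 \<le> a" "b < T" "{a..b} \<subseteq> {0<..<1}"
    using T l by (auto simp: a_def b_def)
  have dw_ab: "continuous_on {a..b} dw"
    using ab by (auto intro: continuous_on_subset[OF dw])
  let ?L = "lebesgue_on {a..b}"
  let ?S = "step_slope"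
  txt \<open>The AM-GM weights \<open>96/7\<close> and \<open>k\<close> make each error term \<open>7 l/384\<close>.\<close>
  define k where "k = 576 * ?S / (7 * l)"
  have k: "0 < k"
    using step_slope(1) l by (simp add: k_def)
  have "integrable ?L (\<lambda>x. du x + ((dw x)\<^sup>2 - 1))"
    using Bochner_Integration.integrable_add[OF weak_partial_integrable(2)[OF wpu compact_Icc ab(7)]
        continuous_imp_integrable_real[OF continuous_on_diff[OF continuous_on_power[OF dw_ab] continuous_on_const]]]
    by simp
  then have "integrable ?L (\<lambda>x. du x + (dw x)\<^sup>2 - 1)"
    by (simp add: add_diff_eq)
  then have "integral\<^sup>L ?L (\<lambda>x. \<bar>du x + (dw x)\<^sup>2 - 1\<bar>) \<le> (96/7) / 2 * (e / a) + (b - a) / (2 * (96/7))"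
    using misfit_integral_le[OF En wpu dw_ab ab(1) _ ab(3)] ab by (intro integral_abs_le_amgm) auto
  then have G: "integral\<^sup>L ?L (\<lambda>x. \<bar>du x + (dw x)\<^sup>2 - 1\<bar>) \<le> 48/7 * (e / a) + 7/384 * l"
    using ab(4) by simp
  have "integral\<^sup>L ?L (\<lambda>x. \<bar>u x\<bar>) \<le> k / 2 * (b * e) + (b - a) / (2 * k)"
    using displacement_integral_le[OF En wpu ab(1) _ ab(3)] weak_partial_integrable(1)[OF wpu compact_Icc ab(7)]
      ab k
    by (intro integral_abs_le_amgm) auto
  then have U: "integral\<^sup>L ?L (\<lambda>x. \<bar>u x\<bar>) \<le> k / 2 * (b * e) + l / (4 * k)"
    using ab(4) by simp
  have "6 * ?S / l * integral\<^sup>L ?L (\<lambda>x. \<bar>u x\<bar>) \<le> 6 * ?S / l * (k / 2 * (b * e) + l / (4 * k))"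
    using U step_slope(1) l by (intro mult_left_mono) auto
  also have "\<dots> = 1728/7 * ?S\<^sup>2 * (b * e / l\<^sup>2) + 7/384 * l"
    using step_slope(1) l by (simp add: k_def field_simps power2_eq_square)
  also have "\<dots> \<le> 1728/7 * ?S\<^sup>2 * (T * e / l\<^sup>2) + 7/384 * l"
    using ab En(2) by (intro add_mono mult_left_mono divide_right_mono mult_right_mono) auto
  finally have "7/192 * l \<le> 48/7 * (e / a) + 1728/7 * ?S\<^sup>2 * (T * e / l\<^sup>2)"
    using misfit_lower_bound_near_exit[OF En wpu wpd dw T \<open>0 < h\<close> l] G unfolding a_def b_def by linarith
  also have "48/7 * (e / a) \<le> 96/7 * (e / T)"
    using ab(5) T En(2) frac_le[of e e "T / 2" a] by simp
  finally have "l \<le> 18432/49 * (e / T) + 331776/49 * ?S\<^sup>2 * (T * e / l\<^sup>2)"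
    by simp
  also have "\<dots> \<le> 6800 * ?S\<^sup>2 * (e / T) + 6800 * ?S\<^sup>2 * (T * e / l\<^sup>2)"
  proof (rule add_mono)
    have "1 \<le> ?S\<^sup>2"
      using step_slope(1) by (simp add: one_le_power)
    then show "18432/49 * (e / T) \<le> 6800 * ?S\<^sup>2 * (e / T)"
      using T En(2) by (intro mult_right_mono) auto
    show "331776/49 * ?S\<^sup>2 * (T * e / l\<^sup>2) \<le> 6800 * ?S\<^sup>2 * (T * e / l\<^sup>2)"
      using T En(2) by (intro mult_right_mono) auto
  qed
  finally show ?thesis
    by (simp add: distrib_left)
qed

lemma powr_half_times_powr_three_halves_sq:
  fixes T h :: real
  assumes "0 \<le> T" "0 \<le> h"
  shows "(T powr (1/2) * h powr (3/2))\<^sup>2 = T * h ^ 3"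
proof -
  have "(T powr (1/2))\<^sup>2 = T"
    using assms(1) by (simp add: powr_half_sqrt)
  moreover have "(h powr (3/2))\<^sup>2 = h ^ 3"
    using assms(2) by (cases "h = 0") (simp_all add: powr_power powr_numeral)
  ultimately show ?thesis
    by (simp add: power_mult_distrib)
qed

lemma min_powr_le_mult:
  fixes T h :: real
  assumes "0 < T" "0 < h"
  shows "min (T powr (1/2) * h powr (3/2)) (T\<^sup>2) \<le> T * h"
proof (cases "h \<le> T")
  case True
  have "(T powr (1/2) * h powr (3/2))\<^sup>2 = (T * h) * (h * h)"
    using assms powr_half_times_powr_three_halves_sq[of T h] by (simp add: power3_eq_cube algebra_simps)
  also have "\<dots> \<le> (T * h)\<^sup>2"
    using True assms by (simp add: power2_eq_square mult_left_mono mult_right_mono)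
  finally have "T powr (1/2) * h powr (3/2) \<le> T * h"
    by (rule power2_le_imp_le) (use assms in simp)
  then show ?thesis
    by (simp add: min_le_iff_disj)
next
  case False
  then have "T\<^sup>2 \<le> T * h"
    using assms by (simp add: power2_eq_square)
  then show ?thesis
    by (simp add: min_le_iff_disj)
qed

lemma powr_half_times_powr_three_halves_le:
  fixes T h c :: real
  assumes "0 \<le> T" "0 \<le> h" "0 \<le> c" "T\<^sup>2 * h ^ 6 \<le> c ^ 4"
  shows "T powr (1/2) * h powr (3/2) \<le> c"
proof -
  let ?x = "T powr (1/2) * h powr (3/2)"
  have "?x ^ 4 = (?x\<^sup>2)\<^sup>2"
    by (simp flip: power_mult)
  also have "\<dots> = T\<^sup>2 * h ^ 6"
    unfolding powr_half_times_powr_three_halves_sq[OF assms(1,2)]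
    by (simp add: power_mult_distrib flip: power_mult)
  finally have "?x ^ 4 \<le> c ^ 4"
    using assms(4) by simp
  moreover have "0 \<le> ?x"
    by simp
  ultimately show ?thesis
    using assms(3) power_mono_iff[of ?x c 4] by simp
qed

text \<open>The scale \<open>h\<^sup>2 T/(32 e)\<close> is the largest one allowed by \<open>32 l e \<le> h\<^sup>2 T\<close>.\<close>
lemma min_le_of_bound_at_critical_scale:
  fixes T h e K :: real
  assumes T: "0 < T" and h: "0 < h" and e: "0 < e" and K: "1 \<le> K"
    and bound: "h\<^sup>2 * T / (32 * e) \<le> K * (e / T + T * e / (h\<^sup>2 * T / (32 * e))\<^sup>2)"
  shows "min (T powr (1/2) * h powr (3/2)) (T\<^sup>2) \<le> 16 * K * e"
proof -
  define l where "l = h\<^sup>2 * T / (32 * e)"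
  have "0 < l"
    using T h e by (simp add: l_def)
  have K_le: "K \<le> K\<^sup>2" "K \<le> K ^ 4"
    using power_increasing[of 1 2 K] power_increasing[of 1 4 K] K by simp_all
  have "l \<le> K * e / T + K * T * e / l\<^sup>2"
    using bound by (simp add: l_def distrib_left)
  then consider (bending) "l \<le> 2 * K * e / T" | (stretching) "l \<le> 2 * K * T * e / l\<^sup>2"
    by linarith
  then show ?thesis
  proof cases
    case bending
    then have "(T * h)\<^sup>2 \<le> 64 * K * e\<^sup>2"
      using T e by (simp add: l_def field_simps power2_eq_square)
    also have "\<dots> \<le> 64 * K\<^sup>2 * e\<^sup>2"
      using K_le by (intro mult_right_mono) auto
    also have "\<dots> = (8 * K * e)\<^sup>2"
      by (simp add: power_mult_distrib)
    finally have "T * h \<le> 8 * K * e"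
      by (rule power2_le_imp_le) (use K e in simp)
    moreover have "0 \<le> K * e"
      using K e by simp
    ultimately show ?thesis
      using min_powr_le_mult[OF T h] by linarith
  next
    case stretching
    then have "l ^ 3 \<le> 2 * K * T * e"
      using \<open>0 < l\<close> by (simp add: field_simps power2_eq_square power3_eq_cube)
    moreover have "l ^ 3 = h ^ 6 * T ^ 3 / (32768 * e ^ 3)"
      by (simp add: l_def power_divide power_mult_distrib flip: power_mult)
    ultimately have "h ^ 6 * T ^ 3 \<le> (2 * K * T * e) * (32768 * e ^ 3)"
      using e by (simp add: divide_le_eq)
    then have "T * (T\<^sup>2 * h ^ 6) \<le> T * (65536 * K * e ^ 4)"
      by (simp add: algebra_simps power2_eq_square power3_eq_cube power4_eq_xxxx)
    then have "T\<^sup>2 * h ^ 6 \<le> 65536 * K * e ^ 4"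
      using T by simp
    also have "\<dots> \<le> (16 * K * e) ^ 4"
      using K_le e by (simp add: power_mult_distrib mult_right_mono)
    finally have "T powr (1/2) * h powr (3/2) \<le> 16 * K * e"
      using T h K e by (intro powr_half_times_powr_three_halves_le) auto
    then show ?thesis
      by (simp add: min_le_iff_disj)
  qed
qed

lemma min_le_of_scale_bound:
  fixes T h e K :: real
  assumes T: "0 < T" and h: "0 < h" and e: "0 \<le> e" and K: "1 \<le> K"
    and scale: "\<And>l. 0 < l \<Longrightarrow> l \<le> T / 2 \<Longrightarrow> 32 * l * e \<le> h\<^sup>2 * T \<Longrightarrow>
                  l \<le> K * (e / T + T * e / l\<^sup>2)"
  shows "min (T powr (1/2) * h powr (3/2)) (T\<^sup>2) \<le> 16 * K * e"
proof (cases "16 * e \<le> h\<^sup>2")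
  case True
  have "T / 2 \<le> K * (e / T + T * e / (T / 2)\<^sup>2)"
    using True T by (intro scale) auto
  also have "\<dots> = 5 * K * e / T"
    using T by (simp add: field_simps power2_eq_square)
  finally have "T\<^sup>2 \<le> 10 * K * e"
    using T by (simp add: field_simps power2_eq_square)
  moreover have "0 \<le> K * e"
    using K e by simp
  ultimately show ?thesis
    unfolding min_le_iff_disj by linarith
next
  case False
  then have "0 < e"
    using h by (smt (verit) zero_less_power2)
  then show ?thesis
    using False T h K by (intro min_le_of_bound_at_critical_scale scale) (auto simp: field_simps)
qed

lemma tau_exits_Wset:
  fixes dw :: "real \<Rightarrow> real"
  assumes dw: "continuous_on {0<..1} dw" and "\<exists>t\<in>{0<..1}. dw t \<notin> Wset"
  shows "0 < tau dw" "tau dw \<le> 1" "dw (tau dw) \<notin> Wset"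
proof -
  obtain t0 where t0: "t0 \<in> {0<..1}" "dw t0 \<notin> Wset"
    using assms(2) by blast
  define K where "K = {t0..1} \<inter> dw -` (- Wset)"
  have "closed (- Wset)"
    unfolding Wset_def by (intro closed_Compl open_Un open_greaterThanLessThan)
  then have "closed K"
    unfolding K_def using t0 by (intro continuous_closed_preimage continuous_on_subset[OF dw]) auto
  moreover have "t0 \<in> K" "bdd_above K"
    using t0 by (auto simp: K_def bdd_above_def)
  ultimately have "Sup K \<in> K"
    by (intro closed_contains_Sup) auto
  moreover have "t \<le> Sup K" if "t \<in> {0<..1}" "dw t \<notin> Wset" for t
    using that \<open>t0 \<in> K\<close> \<open>bdd_above K\<close> cSup_upper[of t0 K] cSup_upper[of t K]
    by (cases "t0 \<le> t") (auto simp: K_def)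
  ultimately have "(GREATEST t. t \<in> {0<..1} \<and> dw t \<notin> Wset) = Sup K"
    using t0 by (intro Greatest_equality) (auto simp: K_def)
  then have "tau dw = Sup K"
    using assms(2) by (simp add: tau_def)
  then show "0 < tau dw" "tau dw \<le> 1" "dw (tau dw) \<notin> Wset"
    using \<open>Sup K \<in> K\<close> t0 by (auto simp: K_def)
qed

lemma min_tau_le_energy:
  fixes u du dw ddw :: "real \<Rightarrow> real"
  assumes "0 < h" and wpu: "weak_partial {0<..<1} u 1 du" and wpd: "weak_partial {0<..<1} dw 1 ddw"
    and dw: "continuous_on {0<..1} dw"
  shows "ennreal (min (tau dw powr (1/2) * h powr (3/2)) ((tau dw)\<^sup>2))
           \<le> ennreal (108800 * step_slope\<^sup>2) * energy h u du dw ddw"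
proof (cases "\<exists>t\<in>{0<..1}. dw t \<notin> Wset")
  case False
  then show ?thesis
    by (simp add: tau_def)
next
  case True
  note T = tau_exits_Wset[OF dw True]
  have K: "1 \<le> 6800 * step_slope\<^sup>2"
    using step_slope(1) one_le_power[of step_slope 2] by linarith
  show ?thesis
  proof (cases "energy h u du dw ddw")
    case (real e)
    have "min (tau dw powr (1/2) * h powr (3/2)) ((tau dw)\<^sup>2) \<le> 16 * (6800 * step_slope\<^sup>2) * e"
      using length_scale_bound[OF _ _ wpu wpd dw T \<open>0 < h\<close>] real
      by (intro min_le_of_scale_bound T(1) \<open>0 < h\<close> K) auto
    then show ?thesis
      using real K by (simp add: ennreal_mult[symmetric] ennreal_leI)
  qed (use step_slope(1) in \<open>simp add: ennreal_mult_top\<close>)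
qed

theorem lemma3p3:
  "\<exists>C>0. \<forall>(\<delta>::real) (h::real) u w du dw ddw.
     \<delta> \<in> {0..1} \<longrightarrow> h \<in> {0<..1/2} \<longrightarrow> admissible \<delta> u w \<longrightarrow>
     weak_partial {0<..<1} u 1 du \<longrightarrow>
     weak_partial {0<..<1} w 1 dw \<longrightarrow>
     weak_partial {0<..<1} dw 1 ddw \<longrightarrow>
     continuous_on {0<..1} dw \<longrightarrow>
     ennreal (min (tau dw powr (1/2) * h powr (3/2)) ((tau dw)\<^sup>2))
       \<le> ennreal C * energy h u du dw ddw"
proof -
  have "0 < 108800 * step_slope\<^sup>2"
    using step_slope(1) by simp
  then show ?thesis
    by (intro exI[of _ "108800 * step_slope\<^sup>2"] conjI allI impI) (auto intro: min_tau_le_energy)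
qed

end
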